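(* Let $1\le r\le q\le\infty$, let $Y$ be a maximal symmetric sequence space and let $X={\rm ID}\mathcal L(Y,\ell_q)$ (with equal norms). Then for all Banach spaces $E,F$, all $T\in\mathcal L(E,F)$ and all $n\in\mathbb N$, \[\pi_{X,r}^n(T)=\sup\Big\{\pi_{q,r}^n(D_\sigma RT)\ :\ R\in\mathcal L(F,\ell_\infty),\ \|R\|\le1,\ \sigma\in Y,\ \|\sigma\|_Y\le1\Big\},\] where $D_\sigma:\ell_\infty\to\ell_\infty$ is the diagonal operator $(\tau_k)\mapsto(\sigma_k\tau_k)$.
   Context: All sequences are scalar sequences indexed by $\mathbb N$; $(e_k)$ denotes the unit vectors, and $P_n\sigma:=\sum_{k=1}^n\sigma_ke_k$. A maximal sequence space is a Banach space $(X,\|\cdot\|_X)$ of scalar sequences such that: (i) $\ell_1\subset X\subset\ell_\infty$ and $\|e_k\|_X=1$ for all $k$; (ii) if $\sigma\in X$ and $\alpha\in\ell_\infty$ then $\alpha\sigma\in X$ with $\|\alpha\sigma\|_X\le\|\alpha\|_\infty\|\sigma\|_X$; (iii) $\sigma\in X$ iff $\sup_n\|P_n\sigma\|_X<\infty$, and then $\|\sigma\|_X=\sup_n\|P_n\sigma\|_X$. It is symmetric if moreover $\sigma\in X$ iff the nonincreasing rearrangement $\sigma^*$ of $(|\sigma_k|)_k$ lies in $X$, with $\|\sigma^*\|_X=\|\sigma\|_X$. For finitely many scalars, $\|(\sigma_k)_1^n\|_X:=\|\sum_1^n\sigma_ke_k\|_X$. For maximal sequence spaces $X,Y$, ${\rm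 ID}\mathcal L(X,Y)$ is the space of sequences $\sigma$ for which the diagonal operator $D_\sigma$ maps $X$ boundedly into $Y$, normed by the operator norm. For Banach spaces $E,F$, $\mathcal L(E,F)$ denotes bounded linear operators. For $x_1,\dots,x_n\in E$ and $1\le q\le\infty$, $\omega_q(x_k)_1^n:=\sup_{a\in B_{E^*}}(\sum_{k=1}^n|\langle x_k,a\rangle|^q)^{1/q}$. For a maximal symmetric sequence space $X$ and $T\in\mathcal L(E,F)$: $\pi_{X,q}^n(T):=\sup\{\|\sum_{k=1}^n\|Tx_k\|_Fe_k\|_X:\ x_1,\dots,x_n\in E,\ \omega_q(x_k)_1^n\le1\}$, and $\pi_{p,q}^n:=\pi_{\ell_p,q}^n$. *)

theory Defs
  imports "HOL-Analysis.Analysis"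
begin

definition unitvec :: "nat \<Rightarrow> (nat \<Rightarrow> real)" where
  "unitvec k = (\<lambda>j. if j = k then 1 else 0)"

definition Psec :: "nat \<Rightarrow> (nat \<Rightarrow> real) \<Rightarrow> (nat \<Rightarrow> real)" where
  "Psec n \<sigma> = (\<lambda>k. if k < n then \<sigma> k else 0)"

definition l1_set :: "(nat \<Rightarrow> real) set" where
  "l1_set = {\<sigma>. summable (\<lambda>k. \<bar>\<sigma> k\<bar>)}"

definition linf_set :: "(nat \<Rightarrow> real) set" where
  "linf_set = {\<sigma>. bounded (range \<sigma>)}"

definition linf_norm :: "(nat \<Rightarrow> real) \<Rightarrow> real" where
  "linf_norm \<alpha> = (SUP k. \<bar>\<alpha> k\<bar>)"

(* nonincreasing rearrangement of (|sigma_k|)_k (for bounded sigma) *)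
definition rearr :: "(nat \<Rightarrow> real) \<Rightarrow> (nat \<Rightarrow> real)" where
  "rearr \<sigma> = (\<lambda>n. Inf {t. 0 \<le> t \<and> finite {k. t < \<bar>\<sigma> k\<bar>} \<and> card {k. t < \<bar>\<sigma> k\<bar>} \<le> n})"

definition maximal_seq_space :: "(nat \<Rightarrow> real) set \<Rightarrow> ((nat \<Rightarrow> real) \<Rightarrow> real) \<Rightarrow> bool" where
  "maximal_seq_space X N \<longleftrightarrow>
     \<comment> \<open>Banach space\<close>
     (\<lambda>k. 0) \<in> X \<and> (\<forall>\<sigma>\<in>X. \<forall>\<tau>\<in>X. (\<lambda>k. \<sigma> k + \<tau> k) \<in> X) \<and> (\<forall>c. \<forall>\<sigma>\<in>X. (\<lambda>k. c * \<sigma> k) \<in> X) \<and>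
     (\<forall>\<sigma>\<in>X. 0 \<le> N \<sigma> \<and> (N \<sigma> = 0 \<longleftrightarrow> (\<forall>k. \<sigma> k = 0))) \<and>
     (\<forall>c. \<forall>\<sigma>\<in>X. N (\<lambda>k. c * \<sigma> k) = \<bar>c\<bar> * N \<sigma>) \<and>
     (\<forall>\<sigma>\<in>X. \<forall>\<tau>\<in>X. N (\<lambda>k. \<sigma> k + \<tau> k) \<le> N \<sigma> + N \<tau>) \<and>
     (\<forall>s. (\<forall>m. s m \<in> X) \<and> (\<forall>e>0. \<exists>M. \<forall>m\<ge>M. \<forall>m'\<ge>M. N (\<lambda>k. s m k - s m' k) < e)
          \<longrightarrow> (\<exists>\<sigma>\<in>X. (\<lambda>m. N (\<lambda>k. s m k - \<sigma> k)) \<longlonglongrightarrow> 0)) \<and>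
     \<comment> \<open>(i)\<close>
     l1_set \<subseteq> X \<and> X \<subseteq> linf_set \<and> (\<forall>k. N (unitvec k) = 1) \<and>
     \<comment> \<open>(ii)\<close>
     (\<forall>\<sigma>\<in>X. \<forall>\<alpha>\<in>linf_set. (\<lambda>k. \<alpha> k * \<sigma> k) \<in> X \<and> N (\<lambda>k. \<alpha> k * \<sigma> k) \<le> linf_norm \<alpha> * N \<sigma>) \<and>
     \<comment> \<open>(iii)\<close>
     (\<forall>\<sigma>. \<sigma> \<in> X \<longleftrightarrow> bdd_above (range (\<lambda>n. N (Psec n \<sigma>)))) \<and>
     (\<forall>\<sigma>\<in>X. N \<sigma> = (SUP n. N (Psec n \<sigma>)))"

definition maximal_symmetric_seq_space :: "(nat \<Rightarrow> real) set \<Rightarrow> ((nat \<Rightarrow> real) \<Rightarrow> real) \<Rightarrow> bool" where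
  "maximal_symmetric_seq_space X N \<longleftrightarrow> maximal_seq_space X N \<and>
     (\<forall>\<sigma>\<in>linf_set. (\<sigma> \<in> X \<longleftrightarrow> rearr \<sigma> \<in> X) \<and> (\<sigma> \<in> X \<longrightarrow> N (rearr \<sigma>) = N \<sigma>))"

definition lq_set :: "ereal \<Rightarrow> (nat \<Rightarrow> real) set" where
  "lq_set q = (if q = \<infinity> then linf_set
               else {\<sigma>. summable (\<lambda>k. \<bar>\<sigma> k\<bar> powr real_of_ereal q)})"

definition lq_norm :: "ereal \<Rightarrow> (nat \<Rightarrow> real) \<Rightarrow> real" where
  "lq_norm q \<sigma> = (if q = \<infinity> then (SUP k. \<bar>\<sigma> k\<bar>)
               else (\<Sum>k. \<bar>\<sigma> k\<bar> powr real_of_ereal q) powr (1 / real_of_ereal q))"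

(* ID L(X,Y): diagonal multipliers mapping X boundedly into Y, with operator norm *)
definition IDL_set :: "(nat \<Rightarrow> real) set \<Rightarrow> ((nat \<Rightarrow> real) \<Rightarrow> real) \<Rightarrow>
    (nat \<Rightarrow> real) set \<Rightarrow> ((nat \<Rightarrow> real) \<Rightarrow> real) \<Rightarrow> (nat \<Rightarrow> real) set" where
  "IDL_set X NX Y NY = {\<sigma>. (\<forall>\<tau>\<in>X. (\<lambda>k. \<sigma> k * \<tau> k) \<in> Y) \<and>
                           (\<exists>C. \<forall>\<tau>\<in>X. NY (\<lambda>k. \<sigma> k * \<tau> k) \<le> C * NX \<tau>)}"

definition IDL_norm :: "(nat \<Rightarrow> real) set \<Rightarrow> ((nat \<Rightarrow> real) \<Rightarrow> real) \<Rightarrow>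
    ((nat \<Rightarrow> real) \<Rightarrow> real) \<Rightarrow> (nat \<Rightarrow> real) \<Rightarrow> real" where
  "IDL_norm X NX NY \<sigma> = Sup {NY (\<lambda>k. \<sigma> k * \<tau> k) | \<tau>. \<tau> \<in> X \<and> NX \<tau> \<le> 1}"

definition omega :: "ereal \<Rightarrow> nat \<Rightarrow> (nat \<Rightarrow> 'e::real_normed_vector) \<Rightarrow> real" where
  "omega q n x = Sup {lq_norm q (\<lambda>k. if k < n then a (x k) else 0) | a.
                        bounded_linear a \<and> onorm a \<le> 1}"

definition pi_X :: "((nat \<Rightarrow> real) \<Rightarrow> real) \<Rightarrow> ereal \<Rightarrow> nat \<Rightarrow>
    ('e::real_normed_vector \<Rightarrow> 'f::real_normed_vector) \<Rightarrow> real" where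
  "pi_X N q n T = Sup {N (\<lambda>k. if k < n then norm (T (x k)) else 0) | x. omega q n x \<le> 1}"

definition pi_pq :: "ereal \<Rightarrow> ereal \<Rightarrow> nat \<Rightarrow>
    ('e::real_normed_vector \<Rightarrow> 'f::real_normed_vector) \<Rightarrow> real" where
  "pi_pq p q n T = pi_X (lq_norm p) q n T"

(* diagonal operator on l_infinity = (nat \<Rightarrow>\<^sub>C real) *)
definition diag_op :: "(nat \<Rightarrow> real) \<Rightarrow> (nat \<Rightarrow>\<^sub>C real) \<Rightarrow> (nat \<Rightarrow>\<^sub>C real)" where
  "diag_op \<sigma> f = Bcontfun (\<lambda>k. \<sigma> k * apply_bcontfun f k)"

end

theory Submission
  imports Defs
begin

text \<open>
  For \<open>w\<close> supported in \<open>{..<n}\<close>, the norm of \<open>X = ID L(Y, \<ell>\<^sub>q)\<close> is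
  \<open>\<parallel>w\<parallel>\<^sub>X = sup {\<parallel>(w\<^sub>k \<tau>\<^sub>k)\<^sub>k\<parallel>\<^sub>q | \<tau> \<in> B\<^sub>Y}\<close>.

  \<open>\<le>\<close>: for \<open>x\<close> with \<open>\<omega>\<^sub>r(x) \<le> 1\<close>, Hahn-Banach gives norming functionals for the \<open>T x\<^sub>k\<close>; as
  coordinates they form an \<open>R : F \<rightarrow> \<ell>\<^sub>\<infinity>\<close> of norm \<open>\<le> 1\<close> with \<open>(R T x\<^sub>k)\<^sub>k = \<parallel>T x\<^sub>k\<parallel>\<close>. Hence
  \<open>\<parallel>(\<parallel>T x\<^sub>k\<parallel> \<tau>\<^sub>k)\<^sub>k\<parallel>\<^sub>q \<le> \<parallel>(\<parallel>D\<^sub>\<tau> R T x\<^sub>k\<parallel>)\<^sub>k\<parallel>\<^sub>q \<le> \<pi>\<^sub>q\<^sub>,\<^sub>r(D\<^sub>\<tau> R T)\<close> for every \<open>\<tau> \<in> B\<^sub>Y\<close>.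

  \<open>\<ge>\<close>: the sup norm of \<open>D\<^sub>\<sigma> R T x\<^sub>k\<close> is almost attained at a coordinate \<open>j\<^sub>k\<close>. The \<open>x\<^sub>k\<close>
  sharing a coordinate are merged, using the dual vector of an \<open>\<ell>\<^sub>q\<close> block, into one vector; since
  \<open>\<parallel>\<cdot>\<parallel>\<^sub>q \<le> \<parallel>\<cdot>\<parallel>\<^sub>r\<close>, the merged family \<open>z\<close> still has \<open>\<omega>\<^sub>r(z) \<le> 1\<close>. The values \<open>\<sigma>\<^sub>j\<close> at the distinct
  coordinates form an injective reindexing \<open>\<tau>\<close> of \<open>\<sigma>\<close>, which stays in \<open>B\<^sub>Y\<close> because \<open>Y\<close> is
  symmetric. So the \<open>\<ell>\<^sub>q\<close> norm is at most \<open>\<parallel>(\<parallel>T z\<^sub>y\<parallel> \<tau>\<^sub>y)\<^sub>y\<parallel>\<^sub>q \<le> \<parallel>(\<parallel>T z\<^sub>y\<parallel>)\<^sub>y\<parallel>\<^sub>X \<le> \<pi>\<^sub>X\<^sub>,\<^sub>r(T)\<close>.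

  Norming functionals are obtained as minimal sublinear minorants (Zorn's lemma) of a shifted norm;
  minimal sublinear functionals are linear.
\<close>

section \<open>Sublinear functionals and norming functionals\<close>

definition sublinear :: "('a::real_vector \<Rightarrow> real) \<Rightarrow> bool" where
  "sublinear p \<longleftrightarrow> (\<forall>x y. p (x + y) \<le> p x + p y) \<and> (\<forall>c x. 0 \<le> c \<longrightarrow> p (c *\<^sub>R x) = c * p x)"

lemma sublinearD:
  assumes "sublinear p"
  shows sublinear_add_le: "p (x + y) \<le> p x + p y"
    and sublinear_scaleR: "0 \<le> c \<Longrightarrow> p (c *\<^sub>R x) = c * p x"
  using assms unfolding sublinear_def by blast+

lemma sublinear_zero: "sublinear p \<Longrightarrow> p 0 = 0"
  using sublinear_scaleR[of p 0 0] by simp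

lemma sublinear_neg_le: "sublinear p \<Longrightarrow> - p (- x) \<le> p x"
  using sublinear_add_le[of p x "- x"] sublinear_zero[of p] by simp

lemma sublinearI:
  assumes add: "\<And>x y. p (x + y) \<le> p x + p y"
    and scale: "\<And>c x. 0 < c \<Longrightarrow> p (c *\<^sub>R x) \<le> c * p x"
  shows "sublinear p"
proof -
  have pos: "p (c *\<^sub>R x) = c * p x" if c: "0 < c" for c x
  proof (rule antisym)
    have "p x = p ((1 / c) *\<^sub>R (c *\<^sub>R x))" using c by simp
    also have "\<dots> \<le> (1 / c) * p (c *\<^sub>R x)" using c by (intro scale) simp
    finally show "c * p x \<le> p (c *\<^sub>R x)" using c by (simp add: field_simps)
  qed (use scale c in auto)
  have "p 0 = 0" using pos[of 2 0] by simp
  then show ?thesis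
    unfolding sublinear_def using add pos by (metis order_less_le scaleR_zero_left mult_zero_left)
qed

lemma le_INF_add:
  fixes f g :: "'b \<Rightarrow> real"
  assumes "A \<noteq> {}" "B \<noteq> {}" and le: "\<And>s t. s \<in> A \<Longrightarrow> t \<in> B \<Longrightarrow> a \<le> f s + g t"
  shows "a \<le> (INF s\<in>A. f s) + (INF t\<in>B. g t)"
proof -
  have "a - g t \<le> (INF s\<in>A. f s)" if "t \<in> B" for t
    using assms that by (intro cINF_greatest) (auto simp: algebra_simps)
  then have "a - (INF s\<in>A. f s) \<le> (INF t\<in>B. g t)"
    using assms by (intro cINF_greatest) (auto simp: algebra_simps)
  then show ?thesis by simp
qed

definition sublinear_shift :: "('a::real_vector \<Rightarrow> real) \<Rightarrow> 'a \<Rightarrow> 'a \<Rightarrow> real" where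
  "sublinear_shift p y x = (INF t\<in>{0..}. p (x + t *\<^sub>R y) - t * p y)"

lemma sublinear_shift_le:
  assumes p: "sublinear p" and t: "0 \<le> t"
  shows "sublinear_shift p y x \<le> p (x + t *\<^sub>R y) - t * p y"
proof -
  have "- p (- x) \<le> p (x + s *\<^sub>R y) - s * p y" if "0 \<le> s" for s
    using sublinear_add_le[OF p, of "x + s *\<^sub>R y" "- x"] sublinear_scaleR[OF p that, of y] by simp
  then have "bdd_below ((\<lambda>s. p (x + s *\<^sub>R y) - s * p y) ` {0..})"
    by (intro bdd_belowI2) auto
  then show ?thesis
    unfolding sublinear_shift_def using t by (auto intro: cINF_lower)
qed

lemma sublinear_shift_le_self: "sublinear p \<Longrightarrow> sublinear_shift p y x \<le> p x"
  using sublinear_shift_le[of p 0 y x] by simp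

lemma sublinear_sublinear_shift:
  assumes p: "sublinear p"
  shows "sublinear (sublinear_shift p y)"
proof (rule sublinearI)
  fix x1 x2
  have "sublinear_shift p y (x1 + x2) \<le> (p (x1 + s *\<^sub>R y) - s * p y) + (p (x2 + t *\<^sub>R y) - t * p y)"
    if "0 \<le> s" "0 \<le> t" for s t
  proof -
    have "sublinear_shift p y (x1 + x2) \<le> p ((x1 + x2) + (s + t) *\<^sub>R y) - (s + t) * p y"
      by (rule sublinear_shift_le[OF p]) (use that in simp)
    also have "(x1 + x2) + (s + t) *\<^sub>R y = (x1 + s *\<^sub>R y) + (x2 + t *\<^sub>R y)"
      by (simp add: algebra_simps)
    also have "p \<dots> \<le> p (x1 + s *\<^sub>R y) + p (x2 + t *\<^sub>R y)"
      by (rule sublinear_add_le[OF p])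
    finally show ?thesis by (simp add: algebra_simps)
  qed
  then show "sublinear_shift p y (x1 + x2) \<le> sublinear_shift p y x1 + sublinear_shift p y x2"
    unfolding sublinear_shift_def[of p y x1] sublinear_shift_def[of p y x2]
    by (intro le_INF_add) auto
next
  fix c :: real and x assume c: "0 < c"
  have "sublinear_shift p y (c *\<^sub>R x) / c \<le> p (x + t *\<^sub>R y) - t * p y" if "0 \<le> t" for t
  proof -
    have "sublinear_shift p y (c *\<^sub>R x) \<le> p (c *\<^sub>R (x + t *\<^sub>R y)) - (c * t) * p y"
      using sublinear_shift_le[OF p, of "c * t" y "c *\<^sub>R x"] c that by (simp add: algebra_simps)
    also have "\<dots> = c * (p (x + t *\<^sub>R y) - t * p y)"
      unfolding sublinear_scaleR[OF p less_imp_le[OF c]] by (simp add: algebra_simps)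
    finally show ?thesis using c by (simp add: field_simps)
  qed
  then have "sublinear_shift p y (c *\<^sub>R x) / c \<le> sublinear_shift p y x"
    unfolding sublinear_shift_def[of p y x] by (intro cINF_greatest) auto
  then show "sublinear_shift p y (c *\<^sub>R x) \<le> c * sublinear_shift p y x"
    using c by (simp add: field_simps)
qed

lemma sublinear_INF_chain:
  fixes C :: "('a::real_vector \<Rightarrow> real) set"
  assumes p: "sublinear p" and ne: "C \<noteq> {}" and sub: "\<And>g. g \<in> C \<Longrightarrow> sublinear g \<and> g \<le> p"
    and chain: "\<And>g h. g \<in> C \<Longrightarrow> h \<in> C \<Longrightarrow> g \<le> h \<or> h \<le> g"
  shows "sublinear (\<lambda>x. INF g\<in>C. g x)" and "\<And>g. g \<in> C \<Longrightarrow> (\<lambda>x. INF g\<in>C. g x) \<le> g"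
proof -
  have bdd: "bdd_below ((\<lambda>g. g x) ` C)" for x
  proof (rule bdd_belowI2)
    fix g assume "g \<in> C"
    then have "sublinear g" "g (- x) \<le> p (- x)" using sub by (auto simp: le_fun_def)
    then show "- p (- x) \<le> g x" using sublinear_neg_le[of g x] by linarith
  qed
  show "(\<lambda>x. INF g\<in>C. g x) \<le> g" if "g \<in> C" for g
    using that bdd by (auto simp: le_fun_def intro: cINF_lower)
  have sub_lin: "sublinear g" if "g \<in> C" for g using sub[OF that] ..
  show "sublinear (\<lambda>x. INF g\<in>C. g x)"
  proof (rule sublinearI)
    fix x y
    have "(INF g\<in>C. g (x + y)) \<le> g x + h y" if "g \<in> C" "h \<in> C" for g h
    proof -
      from chain[OF that] have "\<exists>k\<in>C. k \<le> g \<and> k \<le> h" using that by auto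
      then obtain k where k: "k \<in> C" "k \<le> g" "k \<le> h" by blast
      have "(INF g\<in>C. g (x + y)) \<le> k (x + y)" using k bdd by (auto intro: cINF_lower)
      also have "\<dots> \<le> k x + k y" by (rule sublinear_add_le[OF sub_lin[OF k(1)]])
      also have "\<dots> \<le> g x + h y" using k by (simp add: add_mono le_funD)
      finally show ?thesis .
    qed
    then show "(INF g\<in>C. g (x + y)) \<le> (INF g\<in>C. g x) + (INF g\<in>C. g y)"
      using ne by (intro le_INF_add) auto
  next
    fix c :: real and x assume c: "0 < c"
    have "(INF g\<in>C. g (c *\<^sub>R x)) / c \<le> g x" if "g \<in> C" for g
    proof -
      have "(INF g\<in>C. g (c *\<^sub>R x)) \<le> g (c *\<^sub>R x)" using that bdd by (auto intro: cINF_lower)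
      then show ?thesis using sublinear_scaleR[OF sub_lin[OF that], of c x] c by (simp add: field_simps)
    qed
    then have "(INF g\<in>C. g (c *\<^sub>R x)) / c \<le> (INF g\<in>C. g x)"
      using ne by (intro cINF_greatest) auto
    then show "(INF g\<in>C. g (c *\<^sub>R x)) \<le> c * (INF g\<in>C. g x)"
      using c by (simp add: field_simps)
  qed
qed

lemma minimal_sublinear_below:
  fixes p :: "'a::real_vector \<Rightarrow> real"
  assumes p: "sublinear p"
  obtains g where "sublinear g" "g \<le> p" "\<And>h. sublinear h \<Longrightarrow> h \<le> g \<Longrightarrow> h = g"
proof -
  define A where "A = {g. sublinear g \<and> g \<le> p}"
  have "\<exists>m\<in>A. \<forall>g\<in>A. g \<le> m \<longrightarrow> g = m"
  proof (rule predicate_Zorn)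
    show "partial_order_on A (relation_of (\<lambda>g h. h \<le> g) A)"
      by (rule partial_order_on_relation_ofI) auto
  next
    fix C assume C: "C \<in> Chains (relation_of (\<lambda>g h. h \<le> g) A)"
    then have CA: "C \<subseteq> A" by (rule Chains_relation_of)
    show "\<exists>u\<in>A. \<forall>g\<in>C. u \<le> g"
    proof (cases "C = {}")
      case True
      then show ?thesis using p unfolding A_def by auto
    next
      case False
      then obtain g where g: "g \<in> C" by blast
      have sub: "sublinear g \<and> g \<le> p" if "g \<in> C" for g using that CA unfolding A_def by blast
      have chain: "g \<le> h \<or> h \<le> g" if "g \<in> C" "h \<in> C" for g h
        using C that by (auto simp: Chains_def relation_of_def)
      have INF_sub: "sublinear (\<lambda>x. INF g\<in>C. g x)"
        by (rule sublinear_INF_chain(1)[OF p False]) (use sub chain in auto)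
      have INF_le: "(\<lambda>x. INF g\<in>C. g x) \<le> h" if "h \<in> C" for h
        by (rule sublinear_INF_chain(2)[OF p False _ _ that]) (use sub chain in auto)
      have "(\<lambda>x. INF g\<in>C. g x) \<le> p" using INF_le[OF g] sub[OF g] by (blast intro: order_trans)
      then have "(\<lambda>x. INF g\<in>C. g x) \<in> A" using INF_sub unfolding A_def by blast
      then show ?thesis using INF_le by blast
    qed
  qed
  then obtain g where "g \<in> A" "\<And>h. h \<in> A \<Longrightarrow> h \<le> g \<Longrightarrow> h = g" by blast
  then show thesis unfolding A_def by (intro that) (auto intro: order_trans)
qed

text \<open>For a minimal sublinear \<open>g\<close>, the minorant \<open>sublinear_shift g y \<le> g\<close> coincides with \<open>g\<close>,
  and evaluating it at \<open>t = 1\<close> yields \<open>g x + g y \<le> g (x + y)\<close>.\<close>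

lemma minimal_sublinear_linear:
  fixes g :: "'a::real_vector \<Rightarrow> real"
  assumes g: "sublinear g" and minimal: "\<And>h. sublinear h \<Longrightarrow> h \<le> g \<Longrightarrow> h = g"
  shows "linear g"
proof -
  have add: "g (x + y) = g x + g y" for x y
  proof -
    have "sublinear_shift g y = g"
      using minimal sublinear_sublinear_shift[OF g] sublinear_shift_le_self[OF g] by (simp add: le_fun_def)
    then have "g x \<le> g (x + y) - g y" using sublinear_shift_le[OF g, of 1 y x] by simp
    then show ?thesis using sublinear_add_le[OF g, of x y] by simp
  qed
  have "g (c *\<^sub>R x) = c * g x" for c x
  proof (cases "0 \<le> c")
    case False
    have "g (c *\<^sub>R x) = - g ((- c) *\<^sub>R x)"
      using add[of "c *\<^sub>R x" "(- c) *\<^sub>R x"] sublinear_zero[OF g] by (simp add: scaleR_left_distrib[symmetric])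
    then show ?thesis using sublinear_scaleR[OF g, of "- c" x] False by simp
  qed (use sublinear_scaleR[OF g] in auto)
  with add show ?thesis by (intro linearI) auto
qed

lemma norm_le_of_onorm_le_1:
  assumes "bounded_linear f" "onorm f \<le> 1"
  shows "norm (f x) \<le> norm x"
  using onorm[OF assms(1), of x] mult_right_mono[OF assms(2) norm_ge_zero[of x]] by simp

lemma norming_functional:
  fixes x0 :: "'a::real_normed_vector"
  obtains f where "bounded_linear f" "onorm f \<le> 1" "f x0 = norm x0"
proof -
  have norm: "sublinear (norm :: 'a \<Rightarrow> real)"
    unfolding sublinear_def by (auto intro: norm_triangle_ineq)
  obtain g where g: "sublinear g" "g \<le> sublinear_shift norm x0"
    and minimal: "\<And>h. sublinear h \<Longrightarrow> h \<le> g \<Longrightarrow> h = g"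
    using minimal_sublinear_below[OF sublinear_sublinear_shift[OF norm]] by blast
  have lin: "linear g" by (rule minimal_sublinear_linear[OF g(1) minimal])
  have le_norm: "g x \<le> norm x" for x
    using le_funD[OF g(2), of x] sublinear_shift_le_self[OF norm, of x0 x] by simp
  have abs_le: "\<bar>g x\<bar> \<le> norm x" for x
    using le_norm[of x] le_norm[of "- x"] linear_neg[OF lin, of x] by auto
  have "- g x0 = g (- x0)" using linear_neg[OF lin] by simp
  also have "\<dots> \<le> norm (- x0 + 1 *\<^sub>R x0) - 1 * norm x0"
    using le_funD[OF g(2), of "- x0"] sublinear_shift_le[OF norm, of 1 x0 "- x0"] by simp
  finally have "g x0 = norm x0" using le_norm[of x0] by simp
  moreover have "bounded_linear g"
    using lin abs_le by (intro bounded_linear_intro[where K = 1]) (auto simp: linear_add linear_scale)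
  moreover have "onorm g \<le> 1" using abs_le by (intro onorm_bound) auto
  ultimately show thesis by (intro that)
qed

section \<open>Finite \<open>\<ell>\<^sub>q\<close> norms\<close>

definition lp_norm_on :: "real \<Rightarrow> 'i set \<Rightarrow> ('i \<Rightarrow> real) \<Rightarrow> real" where
  "lp_norm_on p A f = (\<Sum>k\<in>A. \<bar>f k\<bar> powr p) powr (1 / p)"

lemma lp_norm_on_nonneg: "0 \<le> lp_norm_on p A f"
  unfolding lp_norm_on_def by simp

lemma lp_norm_on_powr: "0 < p \<Longrightarrow> lp_norm_on p A f powr p = (\<Sum>k\<in>A. \<bar>f k\<bar> powr p)"
  unfolding lp_norm_on_def powr_powr by (simp add: sum_nonneg)

lemma lp_norm_on_eqI:
  assumes "0 < p" "0 \<le> s" "s powr p = (\<Sum>k\<in>A. \<bar>f k\<bar> powr p)"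
  shows "lp_norm_on p A f = s"
  unfolding lp_norm_on_def using assms by (simp add: powr_powr flip: assms(3))

lemma lp_norm_on_one: "lp_norm_on 1 A f = (\<Sum>k\<in>A. \<bar>f k\<bar>)"
  unfolding lp_norm_on_def by (simp add: sum_nonneg)

lemma lp_norm_on_mono:
  assumes "0 < p" "\<And>k. k \<in> A \<Longrightarrow> \<bar>f k\<bar> \<le> \<bar>g k\<bar>"
  shows "lp_norm_on p A f \<le> lp_norm_on p A g"
  unfolding lp_norm_on_def
  by (intro powr_mono2 sum_mono) (use assms in \<open>auto intro: sum_nonneg\<close>)

lemma abs_le_lp_norm_on:
  assumes "0 < p" "finite A" "k \<in> A"
  shows "\<bar>f k\<bar> \<le> lp_norm_on p A f"
proof -
  have "\<bar>f k\<bar> powr p \<le> (\<Sum>k\<in>A. \<bar>f k\<bar> powr p)"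
    by (rule member_le_sum) (use assms in auto)
  then have "(\<bar>f k\<bar> powr p) powr (1 / p) \<le> (\<Sum>k\<in>A. \<bar>f k\<bar> powr p) powr (1 / p)"
    using assms by (auto intro: powr_mono2)
  then show ?thesis unfolding lp_norm_on_def powr_powr using assms by simp
qed

lemma lp_norm_on_eq_0_iff:
  assumes "0 < p" "finite A"
  shows "lp_norm_on p A f = 0 \<longleftrightarrow> (\<forall>k\<in>A. f k = 0)"
  using abs_le_lp_norm_on[OF assms, of _ f] by (fastforce simp: lp_norm_on_def)

lemma lp_norm_on_cmult:
  assumes "0 < p"
  shows "lp_norm_on p A (\<lambda>k. c * f k) = \<bar>c\<bar> * lp_norm_on p A f"
proof (rule lp_norm_on_eqI[OF assms])
  have "(\<bar>c\<bar> * lp_norm_on p A f) powr p = \<bar>c\<bar> powr p * (\<Sum>k\<in>A. \<bar>f k\<bar> powr p)"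
    using assms by (simp add: powr_mult lp_norm_on_powr)
  also have "\<dots> = (\<Sum>k\<in>A. \<bar>c * f k\<bar> powr p)"
    by (simp add: sum_distrib_left abs_mult powr_mult)
  finally show "(\<bar>c\<bar> * lp_norm_on p A f) powr p = (\<Sum>k\<in>A. \<bar>c * f k\<bar> powr p)" .
qed (simp add: lp_norm_on_nonneg)

lemma lp_norm_on_group:
  assumes "0 < p" "finite A" "finite B" "g ` A \<subseteq> B"
  shows "lp_norm_on p B (\<lambda>y. lp_norm_on p {x\<in>A. g x = y} f) = lp_norm_on p A f"
proof (rule lp_norm_on_eqI[OF assms(1) lp_norm_on_nonneg])
  have "(\<Sum>y\<in>B. \<bar>lp_norm_on p {x\<in>A. g x = y} f\<bar> powr p) = (\<Sum>y\<in>B. \<Sum>x\<in>{x\<in>A. g x = y}. \<bar>f x\<bar> powr p)"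
    using assms(1) by (simp add: lp_norm_on_powr lp_norm_on_nonneg)
  also have "\<dots> = (\<Sum>x\<in>A. \<bar>f x\<bar> powr p)" by (rule sum.group) (use assms in auto)
  finally show "lp_norm_on p A f powr p = (\<Sum>y\<in>B. \<bar>lp_norm_on p {x\<in>A. g x = y} f\<bar> powr p)"
    using assms(1) by (simp add: lp_norm_on_powr)
qed

lemma lp_norm_on_antimono:
  assumes r: "0 < r" "r \<le> p" and A: "finite A"
  shows "lp_norm_on p A f \<le> lp_norm_on r A f"
proof (cases "lp_norm_on r A f = 0")
  case True
  have "0 < p" using r by simp
  then have "lp_norm_on p A f = 0" using True r A by (simp add: lp_norm_on_eq_0_iff)
  then show ?thesis by (simp add: lp_norm_on_nonneg)
next
  case False
  define s where "s = lp_norm_on r A f"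
  have s: "0 < s" using False lp_norm_on_nonneg[of r A f] unfolding s_def by linarith
  define g where "g k = (1 / s) * f k" for k
  have g1: "lp_norm_on r A g = 1"
    unfolding g_def using lp_norm_on_cmult[of r A "1 / s" f] s r unfolding s_def by simp
  have "\<bar>g k\<bar> \<le> 1" if "k \<in> A" for k using abs_le_lp_norm_on[of r A k g] g1 r A that by simp
  then have "(\<Sum>k\<in>A. \<bar>g k\<bar> powr p) \<le> (\<Sum>k\<in>A. \<bar>g k\<bar> powr r)"
    by (intro sum_mono powr_mono') (use r in auto)
  also have "\<dots> = 1" using g1 lp_norm_on_powr[of r A g] r by simp
  finally have "lp_norm_on p A g \<le> 1"
    unfolding lp_norm_on_def using r by (intro powr_le1) (auto simp: sum_nonneg)
  moreover have "lp_norm_on p A g = (1 / s) * lp_norm_on p A f"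
    unfolding g_def using lp_norm_on_cmult[of p A "1 / s" f] s r by simp
  ultimately show ?thesis using s unfolding s_def by (simp add: field_simps)
qed

lemma Holder_inequality_sum:
  assumes p: "1 < p" "1 < p'" "1 / p + 1 / p' = 1" and A: "finite A"
  shows "(\<Sum>k\<in>A. \<bar>u k * b k\<bar>) \<le> lp_norm_on p' A u * lp_norm_on p A b"
proof (cases "lp_norm_on p' A u = 0 \<or> lp_norm_on p A b = 0")
  case True
  then have "(\<Sum>k\<in>A. \<bar>u k * b k\<bar>) = 0" using p A by (auto simp: lp_norm_on_eq_0_iff)
  then show ?thesis by (simp add: lp_norm_on_nonneg)
next
  case False
  define U B where "U = lp_norm_on p' A u" and "B = lp_norm_on p A b"
  have U: "0 < U" and B: "0 < B"
    using False lp_norm_on_nonneg[of p' A u] lp_norm_on_nonneg[of p A b] unfolding U_def B_def by auto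
  have "(\<Sum>k\<in>A. \<bar>u k\<bar> / U * (\<bar>b k\<bar> / B))
      \<le> (\<Sum>k\<in>A. (\<bar>u k\<bar> / U) powr p' / p' + (\<bar>b k\<bar> / B) powr p / p)"
    by (intro sum_mono Youngs_inequality) (use p U B in auto)
  also have "\<dots> = (1 / p') * ((\<Sum>k\<in>A. \<bar>u k\<bar> powr p') / U powr p') + (1 / p) * ((\<Sum>k\<in>A. \<bar>b k\<bar> powr p) / B powr p)"
    by (simp add: sum.distrib powr_divide sum_divide_distrib)
  also have "\<dots> = 1"
  proof -
    have "(\<Sum>k\<in>A. \<bar>u k\<bar> powr p') = U powr p'" "(\<Sum>k\<in>A. \<bar>b k\<bar> powr p) = B powr p"
      unfolding U_def B_def using p by (simp_all add: lp_norm_on_powr)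
    then show ?thesis using p U B by (simp add: add.commute)
  qed
  finally show ?thesis
    using U B unfolding U_def[symmetric] B_def[symmetric]
    by (simp add: abs_mult sum_divide_distrib[symmetric] field_simps)
qed

text \<open>The norming vector \<open>\<beta>\<close> for \<open>d\<close> is \<open>\<beta> k = sgn (d k) * (\<bar>d k\<bar> / \<parallel>d\<parallel>\<^sub>p) powr (p - 1)\<close>,
  which has norm \<open>1\<close> in the conjugate exponent.\<close>

lemma lp_norm_on_dual_gt_1:
  assumes p: "1 < p" and A: "finite A" and pos: "0 < lp_norm_on p A d"
  obtains \<beta> where "(\<Sum>k\<in>A. \<beta> k * d k) = lp_norm_on p A d"
    and "\<And>b. \<bar>\<Sum>k\<in>A. \<beta> k * b k\<bar> \<le> lp_norm_on p A b"
proof -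
  define S where "S = lp_norm_on p A d"
  define p' where "p' = p / (p - 1)"
  have p': "1 < p'" "1 / p + 1 / p' = 1" unfolding p'_def using p by (auto simp: field_simps)
  define \<beta> where "\<beta> k = sgn (d k) * (\<bar>d k\<bar> / S) powr (p - 1)" for k
  have S_powr: "S powr p = (\<Sum>k\<in>A. \<bar>d k\<bar> powr p)" unfolding S_def using p by (simp add: lp_norm_on_powr)
  have "\<beta> k * d k = \<bar>d k\<bar> powr p / S powr (p - 1)" for k
  proof -
    have "\<beta> k * d k = \<bar>d k\<bar> * (\<bar>d k\<bar> / S) powr (p - 1)"
      unfolding \<beta>_def by (simp add: abs_sgn mult.left_commute mult.commute)
    also have "\<dots> = \<bar>d k\<bar> powr p / S powr (p - 1)"
      using powr_mult_base[of "\<bar>d k\<bar>" "p - 1"] by (simp add: powr_divide)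
    finally show ?thesis .
  qed
  then have "(\<Sum>k\<in>A. \<beta> k * d k) = S powr p / S powr (p - 1)"
    by (simp add: S_powr sum_divide_distrib)
  also have "\<dots> = S" using pos by (simp add: S_def powr_diff)
  finally have "(\<Sum>k\<in>A. \<beta> k * d k) = lp_norm_on p A d" unfolding S_def .
  moreover have "\<bar>\<beta> k\<bar> powr p' = \<bar>d k\<bar> powr p / S powr p" for k
  proof -
    have "(p - 1) * p' = p" unfolding p'_def using p by simp
    then show ?thesis unfolding \<beta>_def by (simp add: abs_mult abs_sgn_eq powr_powr powr_divide)
  qed
  then have "lp_norm_on p' A \<beta> = 1"
    using pos p' unfolding S_def[symmetric]
    by (intro lp_norm_on_eqI) (auto simp: sum_divide_distrib[symmetric] simp flip: S_powr)
  then have "\<bar>\<Sum>k\<in>A. \<beta> k * b k\<bar> \<le> lp_norm_on p A b" for b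
    using Holder_inequality_sum[OF p p' A, of \<beta> b] by (simp add: order_trans[OF sum_abs])
  ultimately show thesis by (rule that)
qed

lemma lp_norm_on_dual:
  assumes p: "1 \<le> p" and A: "finite A"
  obtains \<beta> where "(\<Sum>k\<in>A. \<beta> k * d k) = lp_norm_on p A d"
    and "\<And>b. \<bar>\<Sum>k\<in>A. \<beta> k * b k\<bar> \<le> lp_norm_on p A b"
proof -
  consider "p = 1" | "1 < p" "lp_norm_on p A d = 0" | "1 < p" "0 < lp_norm_on p A d"
    using p lp_norm_on_nonneg[of p A d] by fastforce
  then show thesis
  proof cases
    case 1
    have "(\<Sum>k\<in>A. sgn (d k) * d k) = lp_norm_on p A d"
      unfolding 1 lp_norm_on_one by (simp add: abs_sgn mult.commute)
    moreover have "\<bar>\<Sum>k\<in>A. sgn (d k) * b k\<bar> \<le> lp_norm_on p A b" for b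
      unfolding 1 lp_norm_on_one
      by (rule order_trans[OF sum_abs sum_mono]) (auto simp: abs_mult abs_sgn_eq)
    ultimately show thesis by (rule that)
  next
    case 2
    then show thesis by (intro that[of "\<lambda>_. 0"]) (simp_all add: lp_norm_on_nonneg)
  next
    case 3
    then show thesis using lp_norm_on_dual_gt_1[OF _ A] that by blast
  qed
qed

definition sup_norm_on :: "'i set \<Rightarrow> ('i \<Rightarrow> real) \<Rightarrow> real" where
  "sup_norm_on A f = Max (insert 0 ((\<lambda>k. \<bar>f k\<bar>) ` A))"

lemma sup_norm_on_le_iff:
  "finite A \<Longrightarrow> sup_norm_on A f \<le> M \<longleftrightarrow> 0 \<le> M \<and> (\<forall>k\<in>A. \<bar>f k\<bar> \<le> M)"
  unfolding sup_norm_on_def by simp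

lemma sup_norm_on_nonneg: "finite A \<Longrightarrow> 0 \<le> sup_norm_on A f"
  unfolding sup_norm_on_def by simp

lemma abs_le_sup_norm_on: "finite A \<Longrightarrow> k \<in> A \<Longrightarrow> \<bar>f k\<bar> \<le> sup_norm_on A f"
  unfolding sup_norm_on_def by simp

lemma sup_norm_on_mono:
  "finite A \<Longrightarrow> (\<And>k. k \<in> A \<Longrightarrow> \<bar>f k\<bar> \<le> \<bar>g k\<bar>) \<Longrightarrow> sup_norm_on A f \<le> sup_norm_on A g"
  by (subst sup_norm_on_le_iff) (auto intro: order_trans abs_le_sup_norm_on sup_norm_on_nonneg)

lemma sup_norm_on_cmult:
  assumes A: "finite A"
  shows "sup_norm_on A (\<lambda>k. c * f k) = \<bar>c\<bar> * sup_norm_on A f"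
proof -
  have "mono (\<lambda>t. \<bar>c\<bar> * t)" by (simp add: mono_def mult_left_mono)
  then have "\<bar>c\<bar> * sup_norm_on A f = Max ((\<lambda>t. \<bar>c\<bar> * t) ` insert 0 ((\<lambda>k. \<bar>f k\<bar>) ` A))"
    unfolding sup_norm_on_def using A by (simp add: mono_Max_commute)
  also have "\<dots> = sup_norm_on A (\<lambda>k. c * f k)"
    unfolding sup_norm_on_def by (simp add: image_image abs_mult)
  finally show ?thesis ..
qed

lemma sup_norm_on_group:
  assumes "finite A" "finite B" "g ` A \<subseteq> B"
  shows "sup_norm_on B (\<lambda>y. sup_norm_on {x\<in>A. g x = y} f) = sup_norm_on A f"
proof (rule antisym)
  show "sup_norm_on B (\<lambda>y. sup_norm_on {x\<in>A. g x = y} f) \<le> sup_norm_on A f"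
    using assms by (auto simp: sup_norm_on_le_iff sup_norm_on_nonneg intro: abs_le_sup_norm_on)
  have "\<bar>f k\<bar> \<le> sup_norm_on B (\<lambda>y. sup_norm_on {x\<in>A. g x = y} f)" if k: "k \<in> A" for k
  proof -
    have "\<bar>f k\<bar> \<le> sup_norm_on {x\<in>A. g x = g k} f" using assms k by (intro abs_le_sup_norm_on) auto
    also have "\<dots> \<le> sup_norm_on B (\<lambda>y. sup_norm_on {x\<in>A. g x = y} f)"
      using abs_le_sup_norm_on[of B "g k" "\<lambda>y. sup_norm_on {x\<in>A. g x = y} f"] assms k by auto
    finally show ?thesis .
  qed
  then show "sup_norm_on A f \<le> sup_norm_on B (\<lambda>y. sup_norm_on {x\<in>A. g x = y} f)"
    using assms by (simp add: sup_norm_on_le_iff sup_norm_on_nonneg)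
qed

lemma sup_norm_on_le_lp_norm_on: "0 < p \<Longrightarrow> finite A \<Longrightarrow> sup_norm_on A f \<le> lp_norm_on p A f"
  by (auto simp: sup_norm_on_le_iff lp_norm_on_nonneg intro: abs_le_lp_norm_on)

lemma sup_norm_on_dual:
  assumes A: "finite A"
  obtains \<beta> where "(\<Sum>k\<in>A. \<beta> k * d k) = sup_norm_on A d"
    and "\<And>b. \<bar>\<Sum>k\<in>A. \<beta> k * b k\<bar> \<le> sup_norm_on A b"
proof -
  have "sup_norm_on A d \<in> insert 0 ((\<lambda>k. \<bar>d k\<bar>) ` A)"
    unfolding sup_norm_on_def using A by (intro Max_in) auto
  then consider "sup_norm_on A d = 0" | k0 where "k0 \<in> A" "sup_norm_on A d = \<bar>d k0\<bar>" by auto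
  then show thesis
  proof cases
    case 1
    then show thesis using A by (intro that[of "\<lambda>_. 0"]) (simp_all add: sup_norm_on_nonneg)
  next
    case 2
    define \<beta> where "\<beta> k = (if k = k0 then sgn (d k0) else 0)" for k
    have sum_eq: "(\<Sum>k\<in>A. \<beta> k * b k) = sgn (d k0) * b k0" for b
    proof -
      have "(\<Sum>k\<in>A. \<beta> k * b k) = (\<Sum>k\<in>A. if k = k0 then sgn (d k0) * b k else 0)"
        by (rule sum.cong) (simp_all add: \<beta>_def)
      then show ?thesis using A 2 by simp
    qed
    show thesis
    proof (rule that[of \<beta>])
      show "(\<Sum>k\<in>A. \<beta> k * d k) = sup_norm_on A d" using 2 by (simp add: sum_eq abs_sgn mult.commute)
      show "\<bar>\<Sum>k\<in>A. \<beta> k * b k\<bar> \<le> sup_norm_on A b" for b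
        using abs_le_sup_norm_on[OF A 2(1), of b] sup_norm_on_nonneg[OF A, of b]
        by (simp add: sum_eq abs_mult abs_sgn_eq)
    qed
  qed
qed

definition lq_norm_on :: "ereal \<Rightarrow> 'i set \<Rightarrow> ('i \<Rightarrow> real) \<Rightarrow> real" where
  "lq_norm_on q A f = (if q = \<infinity> then sup_norm_on A f else lp_norm_on (real_of_ereal q) A f)"

lemma ereal_ge1_cases:
  assumes "1 \<le> (q::ereal)"
  obtains "q = \<infinity>" | p where "q = ereal p" "1 \<le> p"
  using assms by (cases q) auto

lemma lq_norm_on_nonneg: "finite A \<Longrightarrow> 0 \<le> lq_norm_on q A f"
  unfolding lq_norm_on_def by (simp add: sup_norm_on_nonneg lp_norm_on_nonneg)

lemma lq_norm_on_empty [simp]: "lq_norm_on q {} f = 0"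
  unfolding lq_norm_on_def sup_norm_on_def lp_norm_on_def by simp

lemma lq_norm_on_cong: "(\<And>k. k \<in> A \<Longrightarrow> f k = g k) \<Longrightarrow> lq_norm_on q A f = lq_norm_on q A g"
  unfolding lq_norm_on_def sup_norm_on_def lp_norm_on_def by (simp cong: image_cong sum.cong)

lemma lq_norm_on_mono:
  "1 \<le> q \<Longrightarrow> finite A \<Longrightarrow> (\<And>k. k \<in> A \<Longrightarrow> \<bar>f k\<bar> \<le> \<bar>g k\<bar>) \<Longrightarrow> lq_norm_on q A f \<le> lq_norm_on q A g"
  unfolding lq_norm_on_def by (erule ereal_ge1_cases) (auto intro: sup_norm_on_mono lp_norm_on_mono)

lemma abs_le_lq_norm_on: "1 \<le> q \<Longrightarrow> finite A \<Longrightarrow> k \<in> A \<Longrightarrow> \<bar>f k\<bar> \<le> lq_norm_on q A f"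
  unfolding lq_norm_on_def by (erule ereal_ge1_cases) (auto intro: abs_le_sup_norm_on abs_le_lp_norm_on)

lemma lq_norm_on_cmult:
  "1 \<le> q \<Longrightarrow> finite A \<Longrightarrow> lq_norm_on q A (\<lambda>k. c * f k) = \<bar>c\<bar> * lq_norm_on q A f"
  unfolding lq_norm_on_def by (erule ereal_ge1_cases) (auto simp: sup_norm_on_cmult lp_norm_on_cmult)

lemma lq_norm_on_zero: "1 \<le> q \<Longrightarrow> finite A \<Longrightarrow> lq_norm_on q A (\<lambda>k. 0) = 0"
  using lq_norm_on_cmult[of q A 0 "\<lambda>k. 0"] by simp

lemma lq_norm_on_group:
  "1 \<le> q \<Longrightarrow> finite A \<Longrightarrow> finite B \<Longrightarrow> g ` A \<subseteq> B \<Longrightarrow>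
    lq_norm_on q B (\<lambda>y. lq_norm_on q {x\<in>A. g x = y} f) = lq_norm_on q A f"
  unfolding lq_norm_on_def by (erule ereal_ge1_cases) (auto simp: sup_norm_on_group lp_norm_on_group)

lemma lq_norm_on_antimono:
  assumes "1 \<le> r" "r \<le> q" "finite A"
  shows "lq_norm_on q A f \<le> lq_norm_on r A f"
  using assms(1)
proof (cases rule: ereal_ge1_cases)
  case 1
  then show ?thesis using assms by simp
next
  case (2 p)
  then show ?thesis
    using assms by (cases q) (auto simp: lq_norm_on_def sup_norm_on_le_lp_norm_on lp_norm_on_antimono)
qed

lemma lq_norm_on_le_sum: "1 \<le> q \<Longrightarrow> finite A \<Longrightarrow> lq_norm_on q A f \<le> (\<Sum>k\<in>A. \<bar>f k\<bar>)"
  using lq_norm_on_antimono[of 1 q A f] by (simp add: lq_norm_on_def lp_norm_on_one one_ereal_def)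

lemma lq_norm_on_dual:
  assumes "1 \<le> q" "finite A"
  obtains \<beta> where "(\<Sum>k\<in>A. \<beta> k * d k) = lq_norm_on q A d"
    and "\<And>b. \<bar>\<Sum>k\<in>A. \<beta> k * b k\<bar> \<le> lq_norm_on q A b"
  using assms(1)
proof (cases rule: ereal_ge1_cases)
  case 1
  then show thesis using sup_norm_on_dual[OF assms(2)] that unfolding lq_norm_on_def by auto
next
  case (2 p)
  then show thesis using lp_norm_on_dual[OF _ assms(2)] that unfolding lq_norm_on_def by auto
qed

lemma lq_norm_Psec:
  assumes "1 \<le> q"
  shows "lq_norm q (Psec n f) = lq_norm_on q {..<n} f"
  using assms
proof (cases rule: ereal_ge1_cases)
  case 1
  have "range (\<lambda>k. \<bar>Psec n f k\<bar>) = insert 0 ((\<lambda>k. \<bar>f k\<bar>) ` {..<n})"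
  proof (intro equalityI subsetI)
    fix t assume "t \<in> insert 0 ((\<lambda>k. \<bar>f k\<bar>) ` {..<n})"
    then consider "t = 0" | k where "k < n" "t = \<bar>f k\<bar>" by auto
    then show "t \<in> range (\<lambda>k. \<bar>Psec n f k\<bar>)"
    proof cases
      case 1
      then show ?thesis by (intro range_eqI[of _ _ n]) (simp add: Psec_def)
    next
      case (2 k)
      then show ?thesis by (intro range_eqI[of _ _ k]) (simp add: Psec_def)
    qed
  qed (auto simp: Psec_def)
  then show ?thesis
    using 1 by (simp add: lq_norm_def lq_norm_on_def sup_norm_on_def cSup_eq_Max)
next
  case (2 p)
  have "(\<Sum>k. \<bar>Psec n f k\<bar> powr p) = (\<Sum>k<n. \<bar>Psec n f k\<bar> powr p)"
    by (rule suminf_finite) (auto simp: Psec_def)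
  also have "\<dots> = (\<Sum>k<n. \<bar>f k\<bar> powr p)" by (simp add: Psec_def)
  finally show ?thesis using 2 by (simp add: lq_norm_def lq_norm_on_def lp_norm_on_def)
qed

section \<open>Maximal symmetric sequence spaces and diagonal operators\<close>

lemma maximal_seq_spaceD:
  assumes "maximal_seq_space Y N"
  shows maximal_seq_space_zero: "(\<lambda>k. 0) \<in> Y"
    and maximal_seq_space_norm_zero: "N (\<lambda>k. 0) = 0"
    and maximal_seq_space_norm_nonneg: "\<sigma> \<in> Y \<Longrightarrow> 0 \<le> N \<sigma>"
    and maximal_seq_space_norm_cmult: "\<sigma> \<in> Y \<Longrightarrow> N (\<lambda>k. c * \<sigma> k) = \<bar>c\<bar> * N \<sigma>"
    and maximal_seq_space_l1: "l1_set \<subseteq> Y"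
    and maximal_seq_space_linf: "Y \<subseteq> linf_set"
    and maximal_seq_space_unitvec: "N (unitvec k) = 1"
    and maximal_seq_space_mult: "\<sigma> \<in> Y \<Longrightarrow> \<alpha> \<in> linf_set \<Longrightarrow>
      (\<lambda>k. \<alpha> k * \<sigma> k) \<in> Y \<and> N (\<lambda>k. \<alpha> k * \<sigma> k) \<le> linf_norm \<alpha> * N \<sigma>"
  using assms unfolding maximal_seq_space_def by (elim conjE; fast)+

lemma linf_setI: "(\<And>k. \<bar>\<alpha> k\<bar> \<le> B) \<Longrightarrow> \<alpha> \<in> linf_set"
  unfolding linf_set_def mem_Collect_eq by (rule boundedI[where B = B]) auto

lemma linf_norm_le: "(\<And>k. \<bar>\<alpha> k\<bar> \<le> B) \<Longrightarrow> linf_norm \<alpha> \<le> B"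
  unfolding linf_norm_def by (rule cSUP_least) auto

lemma Psec_in_linf_set: "Psec n f \<in> linf_set"
proof (rule linf_setI)
  show "\<bar>Psec n f k\<bar> \<le> (\<Sum>j<n. \<bar>f j\<bar>)" for k
    by (cases "k < n") (auto simp: Psec_def intro: member_le_sum)
qed

lemma unitvec_in_l1_set: "unitvec k \<in> l1_set"
  unfolding l1_set_def unitvec_def mem_Collect_eq by (rule summable_finite[of "{k}"]) auto

lemma maximal_seq_space_solid:
  assumes M: "maximal_seq_space Y N" and \<beta>: "\<beta> \<in> Y" and le: "\<And>k. \<bar>\<alpha> k\<bar> \<le> \<bar>\<beta> k\<bar>"
  shows "\<alpha> \<in> Y" and "N \<alpha> \<le> N \<beta>"
proof -
  define \<gamma> where "\<gamma> k = (if \<beta> k = 0 then 0 else \<alpha> k / \<beta> k)" for k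
  have \<gamma>_le: "\<bar>\<gamma> k\<bar> \<le> 1" for k using le[of k] unfolding \<gamma>_def by (auto simp: abs_div divide_le_eq_1)
  have \<alpha>_eq: "(\<lambda>k. \<gamma> k * \<beta> k) = \<alpha>"
  proof
    show "\<gamma> k * \<beta> k = \<alpha> k" for k using le[of k] unfolding \<gamma>_def by auto
  qed
  have "\<alpha> \<in> Y \<and> N \<alpha> \<le> linf_norm \<gamma> * N \<beta>"
    using maximal_seq_space_mult[OF M \<beta> linf_setI[of \<gamma> 1, OF \<gamma>_le]] unfolding \<alpha>_eq .
  moreover have "linf_norm \<gamma> * N \<beta> \<le> 1 * N \<beta>"
    by (intro mult_right_mono linf_norm_le \<gamma>_le maximal_seq_space_norm_nonneg[OF M \<beta>])
  ultimately show "\<alpha> \<in> Y" "N \<alpha> \<le> N \<beta>" by simp_all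
qed

lemma abs_le_maximal_seq_space_norm:
  assumes M: "maximal_seq_space Y N" and \<tau>: "\<tau> \<in> Y"
  shows "\<bar>\<tau> k\<bar> \<le> N \<tau>"
proof -
  have "unitvec k \<in> Y" using maximal_seq_space_l1[OF M] unitvec_in_l1_set by blast
  then have "\<bar>\<tau> k\<bar> = N (\<lambda>j. \<tau> k * unitvec k j)"
    by (simp add: maximal_seq_space_norm_cmult[OF M] maximal_seq_space_unitvec[OF M])
  also have "\<dots> \<le> N \<tau>"
    by (rule maximal_seq_space_solid(2)[OF M \<tau>]) (simp add: unitvec_def abs_mult)
  finally show ?thesis .
qed

lemma rearr_reindex:
  assumes \<sigma>: "\<sigma> \<in> linf_set" and A: "finite A" and \<phi>: "inj_on \<phi> A"
    and \<tau>: "\<tau> = (\<lambda>k. if k \<in> A then \<sigma> (\<phi> k) else 0)"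
  shows "0 \<le> rearr \<tau> m" and "rearr \<tau> m \<le> rearr \<sigma> m"
proof -
  define S where "S f = {t. 0 \<le> t \<and> finite {k. t < \<bar>f k\<bar>} \<and> card {k. t < \<bar>f k\<bar>} \<le> m}"
    for f :: "nat \<Rightarrow> real"
  obtain B where B: "\<And>k. \<bar>\<sigma> k\<bar> \<le> B" using \<sigma> unfolding linf_set_def bounded_iff by auto
  have none: "{k. max B 0 < \<bar>\<sigma> k\<bar>} = {}" using B by (auto simp: not_less intro: order_trans)
  have "max B 0 \<in> S \<sigma>" unfolding S_def mem_Collect_eq none by simp
  then have ne: "S \<sigma> \<noteq> {}" by blast
  have sub: "S \<sigma> \<subseteq> S \<tau>"
  proof
    fix t assume t: "t \<in> S \<sigma>"
    have sub1: "{k. t < \<bar>\<tau> k\<bar>} \<subseteq> A" using t unfolding S_def \<tau> by (auto split: if_splits)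
    have "card {k. t < \<bar>\<tau> k\<bar>} \<le> card {k. t < \<bar>\<sigma> k\<bar>}"
    proof (rule card_inj_on_le)
      show "inj_on \<phi> {k. t < \<bar>\<tau> k\<bar>}" using \<phi> sub1 by (rule inj_on_subset)
      show "\<phi> ` {k. t < \<bar>\<tau> k\<bar>} \<subseteq> {k. t < \<bar>\<sigma> k\<bar>}" using sub1 unfolding \<tau> by auto
      show "finite {k. t < \<bar>\<sigma> k\<bar>}" using t unfolding S_def by auto
    qed
    then show "t \<in> S \<tau>" using t finite_subset[OF sub1 A] unfolding S_def by auto
  qed
  have rearr_eq: "rearr f m = Inf (S f)" for f unfolding rearr_def S_def by simp
  show "0 \<le> rearr \<tau> m" unfolding rearr_eq using ne sub by (intro cInf_greatest) (auto simp: S_def)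
  show "rearr \<tau> m \<le> rearr \<sigma> m"
    unfolding rearr_eq by (rule cInf_superset_mono[OF ne _ sub]) (auto simp: S_def intro: bdd_belowI[of _ 0])
qed

text \<open>This is the only place where symmetry of \<open>Y\<close> enters: a finite injective reindexing of
  \<open>\<sigma>\<close> has a pointwise smaller nonincreasing rearrangement.\<close>

lemma maximal_symmetric_seq_space_reindex:
  assumes M: "maximal_symmetric_seq_space Y N" and \<sigma>: "\<sigma> \<in> Y" and A: "finite A"
    and \<phi>: "inj_on \<phi> A" and \<tau>: "\<tau> = (\<lambda>k. if k \<in> A then \<sigma> (\<phi> k) else 0)"
  shows "\<tau> \<in> Y" and "N \<tau> \<le> N \<sigma>"
proof -
  have M1: "maximal_seq_space Y N"
    and sym: "\<And>\<sigma>. \<sigma> \<in> linf_set \<Longrightarrow> (\<sigma> \<in> Y \<longleftrightarrow> rearr \<sigma> \<in> Y) \<and> (\<sigma> \<in> Y \<longrightarrow> N (rearr \<sigma>) = N \<sigma>)"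
    using M unfolding maximal_symmetric_seq_space_def by blast+
  have \<sigma>_linf: "\<sigma> \<in> linf_set" using \<sigma> maximal_seq_space_linf[OF M1] by blast
  then obtain B where B: "\<And>k. \<bar>\<sigma> k\<bar> \<le> B" unfolding linf_set_def bounded_iff by auto
  have \<tau>_linf: "\<tau> \<in> linf_set" by (rule linf_setI[where B = "max B 0"]) (use B in \<open>auto simp: \<tau> le_max_iff_disj\<close>)
  have r\<sigma>: "rearr \<sigma> \<in> Y" "N (rearr \<sigma>) = N \<sigma>" using sym[OF \<sigma>_linf] \<sigma> by auto
  have "\<bar>rearr \<tau> m\<bar> \<le> \<bar>rearr \<sigma> m\<bar>" for m
    using rearr_reindex[OF \<sigma>_linf A \<phi> \<tau>, of m] by linarith
  then have "rearr \<tau> \<in> Y" "N (rearr \<tau>) \<le> N (rearr \<sigma>)"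
    using maximal_seq_space_solid[OF M1 r\<sigma>(1)] by blast+
  then show "\<tau> \<in> Y" "N \<tau> \<le> N \<sigma>" using sym[OF \<tau>_linf] r\<sigma>(2) by auto
qed

lemma diag_op_apply:
  assumes "\<sigma> \<in> linf_set"
  shows "apply_bcontfun (diag_op \<sigma> g) j = \<sigma> j * apply_bcontfun g j"
proof -
  obtain B where B: "\<And>k. \<bar>\<sigma> k\<bar> \<le> B" using assms unfolding linf_set_def bounded_iff by auto
  have "norm (\<sigma> k * apply_bcontfun g k) \<le> B * norm g" for k
    using B[of k] norm_bounded[of g k] by (auto simp: abs_mult intro: mult_mono)
  then have "(\<lambda>k. \<sigma> k * apply_bcontfun g k) \<in> bcontfun" by (intro bcontfun_normI) simp_all
  then show ?thesis unfolding diag_op_def by (simp add: Bcontfun_inverse)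
qed

lemma abs_le_norm_diag_op:
  "\<sigma> \<in> linf_set \<Longrightarrow> \<bar>\<sigma> j * apply_bcontfun g j\<bar> \<le> norm (diag_op \<sigma> g)"
  using norm_bounded[of "diag_op \<sigma> g" j] by (simp add: diag_op_apply)

lemma norm_diag_op_approx:
  assumes \<sigma>: "\<sigma> \<in> linf_set" and z: "z < 1"
  shows "\<exists>j. z * norm (diag_op \<sigma> g) \<le> \<bar>\<sigma> j * apply_bcontfun g j\<bar>"
proof (rule ccontr)
  assume "\<nexists>j. z * norm (diag_op \<sigma> g) \<le> \<bar>\<sigma> j * apply_bcontfun g j\<bar>"
  then have less: "\<bar>\<sigma> j * apply_bcontfun g j\<bar> < z * norm (diag_op \<sigma> g)" for j
    by (simp add: not_le)
  have "norm (diag_op \<sigma> g) \<le> z * norm (diag_op \<sigma> g)"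
    by (rule norm_bound) (use less[THEN less_imp_le] in \<open>simp add: diag_op_apply[OF \<sigma>]\<close>)
  then have "norm (diag_op \<sigma> g) = 0" using z by (smt (verit) mult_le_cancel_right1 norm_ge_zero)
  then show False using less[of 0] by simp
qed

lemma bounded_linear_apply_bcontfun: "bounded_linear (\<lambda>g. apply_bcontfun g j)"
proof (rule bounded_linear_intro[where K = 1])
  show "norm (apply_bcontfun g j) \<le> norm g * 1" for g :: "'a::topological_space \<Rightarrow>\<^sub>C 'b::real_normed_vector"
    using norm_bounded[of g j] by simp
qed auto

section \<open>Weak norms and summing norms\<close>

lemma norming_linear_combination:
  fixes x :: "'i \<Rightarrow> 'a::real_vector"
  assumes r: "1 \<le> r" "r \<le> q" and G: "finite G" and a: "linear a"
  obtains z where "a z = lq_norm_on q G (\<lambda>k. a (x k))"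
    and "\<And>b. linear b \<Longrightarrow> \<bar>b z\<bar> \<le> lq_norm_on r G (\<lambda>k. b (x k))"
proof -
  have q: "1 \<le> q" using r by (rule order_trans)
  obtain \<beta> where \<beta>: "(\<Sum>k\<in>G. \<beta> k * a (x k)) = lq_norm_on q G (\<lambda>k. a (x k))"
    "\<And>c. \<bar>\<Sum>k\<in>G. \<beta> k * c k\<bar> \<le> lq_norm_on q G c"
    using lq_norm_on_dual[OF q G] by metis
  define z where "z = (\<Sum>k\<in>G. \<beta> k *\<^sub>R x k)"
  have b_z: "b z = (\<Sum>k\<in>G. \<beta> k * b (x k))" if "linear b" for b
    unfolding z_def using that by (simp add: linear_sum linear_scale o_def)
  show thesis
  proof (rule that)
    show "a z = lq_norm_on q G (\<lambda>k. a (x k))" using b_z[OF a] \<beta>(1) by simp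
    show "\<bar>b z\<bar> \<le> lq_norm_on r G (\<lambda>k. b (x k))" if "linear b" for b
      unfolding b_z[OF that] using \<beta>(2) lq_norm_on_antimono[OF r G] by (rule order_trans)
  qed
qed

definition first_occurrence :: "(nat \<Rightarrow> 'a) \<Rightarrow> nat \<Rightarrow> nat" where
  "first_occurrence j k = (LEAST i. j i = j k)"

lemma first_occurrence_le: "first_occurrence j k \<le> k"
  unfolding first_occurrence_def by (rule Least_le) simp

lemma apply_first_occurrence: "j (first_occurrence j k) = j k"
  unfolding first_occurrence_def by (rule LeastI[of _ k]) simp

lemma first_occurrence_idem: "first_occurrence j (first_occurrence j k) = first_occurrence j k"
proof -
  have "first_occurrence j (first_occurrence j k) = (LEAST i. j i = j (first_occurrence j k))"
    by (rule first_occurrence_def)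
  also have "\<dots> = first_occurrence j k"
    unfolding apply_first_occurrence by (rule first_occurrence_def[symmetric])
  finally show ?thesis .
qed

lemma inj_on_first_occurrences: "inj_on j {y. first_occurrence j y = y}"
proof (rule inj_onI)
  fix y1 y2 assume y: "y1 \<in> {y. first_occurrence j y = y}" "y2 \<in> {y. first_occurrence j y = y}"
    and "j y1 = j y2"
  then have "first_occurrence j y1 = first_occurrence j y2" unfolding first_occurrence_def by simp
  then show "y1 = y2" using y by simp
qed

lemma omega_eq:
  assumes "1 \<le> r"
  shows "omega r n x = Sup {lq_norm_on r {..<n} (\<lambda>k. a (x k)) | a. bounded_linear a \<and> onorm a \<le> 1}"
  using lq_norm_Psec[OF assms] unfolding omega_def Psec_def by simp

lemma omega_le_iff:
  fixes x :: "nat \<Rightarrow> 'a::real_normed_vector"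
  assumes r: "1 \<le> r"
  shows "omega r n x \<le> c \<longleftrightarrow>
    (\<forall>a. bounded_linear a \<and> onorm a \<le> 1 \<longrightarrow> lq_norm_on r {..<n} (\<lambda>k. a (x k)) \<le> c)"
proof -
  have bound: "lq_norm_on r {..<n} (\<lambda>k. a (x k)) \<le> (\<Sum>k<n. norm (x k))"
    if "bounded_linear a" "onorm a \<le> 1" for a
  proof -
    have "\<bar>a v\<bar> \<le> norm v" for v using norm_le_of_onorm_le_1[OF that] by simp
    then show ?thesis
      using lq_norm_on_le_sum[OF r, of "{..<n}" "\<lambda>k. a (x k)"] by (simp add: sum_mono order_trans)
  qed
  let ?S = "{lq_norm_on r {..<n} (\<lambda>k. a (x k)) | a. bounded_linear a \<and> onorm a \<le> 1}"
  have "bounded_linear (\<lambda>v::'a. 0::real)" "onorm (\<lambda>v::'a. 0::real) \<le> 1"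
    by (simp_all add: onorm_zero)
  then have "?S \<noteq> {}" by blast
  moreover have "bdd_above ?S" using bound by (auto intro!: bdd_aboveI[where M = "\<Sum>k<n. norm (x k)"])
  ultimately show ?thesis unfolding omega_eq[OF r] by (subst cSup_le_iff) auto
qed

lemma lq_norm_on_le_omega:
  assumes "1 \<le> r" "bounded_linear a" "onorm a \<le> 1"
  shows "lq_norm_on r {..<n} (\<lambda>k. a (x k)) \<le> omega r n x"
  using omega_le_iff[OF assms(1), of n x "omega r n x"] assms(2,3) by simp

lemma norm_le_omega:
  assumes "1 \<le> r" "k < n"
  shows "norm (x k) \<le> omega r n x"
proof -
  obtain f where f: "bounded_linear f" "onorm f \<le> 1" "f (x k) = norm (x k)"
    using norming_functional by blast
  have "\<bar>f (x k)\<bar> \<le> lq_norm_on r {..<n} (\<lambda>k. f (x k))"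
    using assms by (intro abs_le_lq_norm_on) auto
  also have "\<dots> \<le> omega r n x" using lq_norm_on_le_omega[OF assms(1) f(1,2)] .
  finally show ?thesis using f(3) by simp
qed

lemma omega_zero: "1 \<le> r \<Longrightarrow> omega r n (\<lambda>k. 0) \<le> 1"
  by (simp add: omega_le_iff linear_simps lq_norm_on_zero)

lemma omega_merge_le:
  fixes x z :: "nat \<Rightarrow> 'a::real_normed_vector"
  assumes r: "1 \<le> r" and g: "g ` {..<n} \<subseteq> {..<n}"
    and z: "\<And>y b. y < n \<Longrightarrow> bounded_linear b \<Longrightarrow> \<bar>b (z y)\<bar> \<le> lq_norm_on r {k\<in>{..<n}. g k = y} (\<lambda>k. b (x k))"
  shows "omega r n z \<le> omega r n x"
  unfolding omega_le_iff[OF r]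
proof (intro allI impI)
  fix b :: "'a \<Rightarrow> real" assume b: "bounded_linear b \<and> onorm b \<le> 1"
  have "lq_norm_on r {..<n} (\<lambda>y. b (z y))
      \<le> lq_norm_on r {..<n} (\<lambda>y. lq_norm_on r {k\<in>{..<n}. g k = y} (\<lambda>k. b (x k)))"
    using z b by (intro lq_norm_on_mono[OF r]) (auto intro: order_trans[OF _ abs_ge_self])
  also have "\<dots> = lq_norm_on r {..<n} (\<lambda>k. b (x k))" by (rule lq_norm_on_group[OF r _ _ g]) simp_all
  also have "\<dots> \<le> omega r n x" using b by (intro lq_norm_on_le_omega[OF r]) auto
  finally show "lq_norm_on r {..<n} (\<lambda>y. b (z y)) \<le> omega r n x" .
qed

lemma lq_norm_on_block_le:
  assumes q: "1 \<le> q" and G: "finite G" and j: "\<And>k. k \<in> G \<Longrightarrow> j k = m"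
    and z: "a m z = lq_norm_on q G (\<lambda>k. a m (x k))" and \<rho>: "\<bar>a m z\<bar> \<le> \<rho>"
  shows "lq_norm_on q G (\<lambda>k. \<sigma> (j k) * a (j k) (x k)) \<le> \<bar>\<sigma> m\<bar> * \<rho>"
proof -
  have "lq_norm_on q G (\<lambda>k. \<sigma> (j k) * a (j k) (x k)) = lq_norm_on q G (\<lambda>k. \<sigma> m * a m (x k))"
    using j by (intro lq_norm_on_cong) simp
  also have "\<dots> = \<bar>\<sigma> m\<bar> * a m z" by (simp add: lq_norm_on_cmult[OF q G] z)
  also have "\<dots> \<le> \<bar>\<sigma> m\<bar> * \<rho>" using \<rho> by (intro mult_left_mono) auto
  finally show ?thesis .
qed

text \<open>\<open>z y\<close> merges the \<open>x k\<close> with the same coordinate \<open>j k\<close>, \<open>y\<close> being the first such \<open>k\<close>: it norms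
  their \<open>\<ell>\<^sub>q\<close> block for \<open>a (j y)\<close> and is dominated by their \<open>\<ell>\<^sub>r\<close> block for every functional.\<close>

lemma merge_equal_coordinates:
  fixes x :: "nat \<Rightarrow> 'a::real_normed_vector"
  assumes r: "1 \<le> r" "r \<le> q" and a: "\<And>m. linear (a m)" "\<And>m v. \<bar>a m v\<bar> \<le> \<rho> v"
  obtains z where "omega r n z \<le> omega r n x"
    and "lq_norm_on q {..<n} (\<lambda>k. \<sigma> (j k) * a (j k) (x k)) \<le>
      lq_norm_on q {..<n} (\<lambda>y. \<rho> (z y) * (if y < n \<and> first_occurrence j y = y then \<sigma> (j y) else 0))"
proof -
  have q: "1 \<le> q" using r by (rule order_trans)
  have \<rho>_nonneg: "0 \<le> \<rho> v" for v by (rule order_trans[OF abs_ge_zero a(2)])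
  define G where "G y = {k\<in>{..<n}. first_occurrence j k = y}" for y
  have first_n: "first_occurrence j ` {..<n} \<subseteq> {..<n}"
    using first_occurrence_le le_less_trans by blast
  have "\<exists>z. a (j y) z = lq_norm_on q (G y) (\<lambda>k. a (j y) (x k)) \<and>
      (\<forall>b. linear b \<longrightarrow> \<bar>b z\<bar> \<le> lq_norm_on r (G y) (\<lambda>k. b (x k)))" for y
  proof -
    have "finite (G y)" by (simp add: G_def)
    from norming_linear_combination[OF r this a(1), where x = x] show ?thesis by blast
  qed
  then obtain z where z: "\<And>y. a (j y) (z y) = lq_norm_on q (G y) (\<lambda>k. a (j y) (x k))"
    "\<And>y b. linear b \<Longrightarrow> \<bar>b (z y)\<bar> \<le> lq_norm_on r (G y) (\<lambda>k. b (x k))" by metis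
  have block: "lq_norm_on q (G y) (\<lambda>k. \<sigma> (j k) * a (j k) (x k))
      \<le> \<bar>\<rho> (z y) * (if y < n \<and> first_occurrence j y = y then \<sigma> (j y) else 0)\<bar>" if "y < n" for y
  proof (cases "first_occurrence j y = y")
    case False
    then have "G y = {}" unfolding G_def using first_occurrence_idem by auto
    then show ?thesis by simp
  next
    case True
    have "lq_norm_on q (G y) (\<lambda>k. \<sigma> (j k) * a (j k) (x k)) \<le> \<bar>\<sigma> (j y)\<bar> * \<rho> (z y)"
      using apply_first_occurrence[of j] z(1)[of y] a(2)[of "j y" "z y"]
      by (intro lq_norm_on_block_le[OF q, where a = a and x = x]) (auto simp: G_def)
    then show ?thesis using True that \<rho>_nonneg[of "z y"] by (simp add: abs_mult mult.commute)
  qed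
  show thesis
  proof (rule that)
    show "omega r n z \<le> omega r n x"
      using first_n z(2) unfolding G_def by (intro omega_merge_le[OF r(1)]) (auto dest: bounded_linear.linear)
    have "lq_norm_on q {..<n} (\<lambda>k. \<sigma> (j k) * a (j k) (x k))
        = lq_norm_on q {..<n} (\<lambda>y. lq_norm_on q (G y) (\<lambda>k. \<sigma> (j k) * a (j k) (x k)))"
      unfolding G_def by (rule lq_norm_on_group[OF q _ _ first_n, symmetric]) simp_all
    also have "\<dots> \<le> lq_norm_on q {..<n}
        (\<lambda>y. \<rho> (z y) * (if y < n \<and> first_occurrence j y = y then \<sigma> (j y) else 0))"
      using block by (intro lq_norm_on_mono[OF q]) (auto simp: G_def lq_norm_on_nonneg)
    finally show "lq_norm_on q {..<n} (\<lambda>k. \<sigma> (j k) * a (j k) (x k)) \<le> \<dots>" .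
  qed
qed

lemma pi_X_least:
  assumes "1 \<le> r" "\<And>x. omega r n x \<le> 1 \<Longrightarrow> N (Psec n (\<lambda>k. norm (T (x k)))) \<le> c"
  shows "pi_X N r n T \<le> c"
  unfolding pi_X_def Psec_def[symmetric]
  by (rule cSup_least) (use assms omega_zero in auto)

lemma pi_X_upper:
  assumes "\<And>x. omega r n x \<le> 1 \<Longrightarrow> N (Psec n (\<lambda>k. norm (T (x k)))) \<le> B"
    and "omega r n x \<le> 1"
  shows "N (Psec n (\<lambda>k. norm (T (x k)))) \<le> pi_X N r n T"
  unfolding pi_X_def Psec_def[symmetric]
  by (rule cSup_upper) (use assms in \<open>auto intro!: bdd_aboveI[where M = B]\<close>)

lemma lq_norm_on_mult_le:
  assumes "maximal_seq_space Y NY" "1 \<le> q" "\<tau> \<in> Y"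
  shows "lq_norm_on q {..<n} (\<lambda>k. w k * \<tau> k) \<le> (\<Sum>k<n. \<bar>w k\<bar>) * NY \<tau>"
proof -
  have "lq_norm_on q {..<n} (\<lambda>k. w k * \<tau> k) \<le> (\<Sum>k<n. \<bar>w k\<bar> * \<bar>\<tau> k\<bar>)"
    using lq_norm_on_le_sum[OF assms(2), of "{..<n}" "\<lambda>k. w k * \<tau> k"] by (simp add: abs_mult)
  also have "\<dots> \<le> (\<Sum>k<n. \<bar>w k\<bar> * NY \<tau>)"
    by (intro sum_mono mult_left_mono abs_le_maximal_seq_space_norm[OF assms(1,3)]) simp
  finally show ?thesis by (simp add: sum_distrib_right)
qed

lemma Psec_mult: "(\<lambda>k. Psec n w k * \<tau> k) = Psec n (\<lambda>k. w k * \<tau> k)"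
  by (auto simp: Psec_def)

lemma Psec_in_IDL_set:
  assumes Y: "maximal_seq_space Y NY" and q: "1 \<le> q"
  shows "Psec n w \<in> IDL_set Y NY (lq_set q) (lq_norm q)"
  unfolding IDL_set_def mem_Collect_eq Psec_mult
proof (intro conjI ballI exI[of _ "\<Sum>k<n. \<bar>w k\<bar>"])
  show "Psec n (\<lambda>k. w k * \<tau> k) \<in> lq_set q" for \<tau>
  proof (cases "q = \<infinity>")
    case False
    have "summable (\<lambda>k. \<bar>Psec n (\<lambda>k. w k * \<tau> k) k\<bar> powr real_of_ereal q)"
      by (rule summable_finite[of "{..<n}"]) (simp_all add: Psec_def)
    then show ?thesis using False by (simp add: lq_set_def)
  qed (simp add: lq_set_def Psec_in_linf_set)
  show "lq_norm q (Psec n (\<lambda>k. w k * \<tau> k)) \<le> (\<Sum>k<n. \<bar>w k\<bar>) * NY \<tau>" if "\<tau> \<in> Y" for \<tau>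
    unfolding lq_norm_Psec[OF q] by (rule lq_norm_on_mult_le[OF Y q that])
qed

lemma IDL_norm_Psec_le_iff:
  assumes Y: "maximal_seq_space Y NY" and q: "1 \<le> q"
  shows "IDL_norm Y NY (lq_norm q) (Psec n w) \<le> c \<longleftrightarrow>
    (\<forall>\<tau>\<in>Y. NY \<tau> \<le> 1 \<longrightarrow> lq_norm_on q {..<n} (\<lambda>k. w k * \<tau> k) \<le> c)"
proof -
  have "lq_norm_on q {..<n} (\<lambda>k. w k * \<tau> k) \<le> (\<Sum>k<n. \<bar>w k\<bar>)" if "\<tau> \<in> Y" "NY \<tau> \<le> 1" for \<tau>
    using lq_norm_on_mult_le[OF Y q that(1), of n w] mult_left_mono[OF that(2), of "\<Sum>k<n. \<bar>w k\<bar>"]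
    by (simp add: sum_nonneg)
  then show ?thesis
    unfolding IDL_norm_def Psec_mult lq_norm_Psec[OF q]
    using maximal_seq_space_zero[OF Y] maximal_seq_space_norm_zero[OF Y]
    by (subst cSup_le_iff) (auto intro!: bdd_aboveI[where M = "\<Sum>k<n. \<bar>w k\<bar>"])
qed

lemma norming_operator:
  fixes v :: "nat \<Rightarrow> 'a::real_normed_vector"
  obtains R :: "'a \<Rightarrow> (nat \<Rightarrow>\<^sub>C real)"
  where "bounded_linear R" "onorm R \<le> 1" "\<And>k. apply_bcontfun (R (v k)) k = norm (v k)"
proof -
  have "\<exists>f. bounded_linear f \<and> onorm f \<le> 1 \<and> f (v k) = norm (v k)" for k
    by (rule norming_functional[of "v k"]) blast
  then obtain f where f: "\<And>k. bounded_linear (f k)" "\<And>k. onorm (f k) \<le> 1"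
    "\<And>k. f k (v k) = norm (v k)"
    by metis
  have f_le: "\<bar>f k u\<bar> \<le> norm u" for k u using norm_le_of_onorm_le_1[OF f(1,2)] by simp
  define R where "R u = Bcontfun (\<lambda>k. f k u)" for u
  have "(\<lambda>k. f k u) \<in> bcontfun" for u
    by (rule bcontfun_normI[where b = "norm u"]) (simp_all add: f_le)
  then have R_apply: "apply_bcontfun (R u) k = f k u" for u k
    unfolding R_def by (simp add: Bcontfun_inverse)
  have R_le: "norm (R u) \<le> norm u" for u
    by (rule norm_bound) (simp add: R_apply f_le)
  have "bounded_linear R"
  proof (rule bounded_linear_intro[where K = 1])
    show "R (u + w) = R u + R w" for u w
      by (rule bcontfun_eqI) (simp add: R_apply linear_add[OF bounded_linear.linear[OF f(1)]])
    show "R (c *\<^sub>R u) = c *\<^sub>R R u" for c u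
      by (rule bcontfun_eqI) (simp add: R_apply linear_scale[OF bounded_linear.linear[OF f(1)]])
    show "norm (R u) \<le> norm u * 1" for u using R_le by simp
  qed
  moreover have "onorm R \<le> 1" by (rule onorm_bound) (simp_all add: R_le)
  ultimately show thesis by (rule that) (simp add: R_apply f(3))
qed

section \<open>Summing norms with respect to \<open>ID L(Y, \<ell>\<^sub>q)\<close>\<close>

locale IDL_lq_space =
  fixes q :: ereal and Y :: "(nat \<Rightarrow> real) set" and NY NX :: "(nat \<Rightarrow> real) \<Rightarrow> real"
  assumes q: "1 \<le> q" and Y: "maximal_symmetric_seq_space Y NY"
    and NX: "\<forall>\<sigma>\<in>IDL_set Y NY (lq_set q) (lq_norm q). NX \<sigma> = IDL_norm Y NY (lq_norm q) \<sigma>"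
begin

lemma Y_maximal: "maximal_seq_space Y NY"
  using Y unfolding maximal_symmetric_seq_space_def by (rule conjunct1)

lemma NX_Psec_le_iff:
  "NX (Psec n w) \<le> c \<longleftrightarrow> (\<forall>\<tau>\<in>Y. NY \<tau> \<le> 1 \<longrightarrow> lq_norm_on q {..<n} (\<lambda>k. w k * \<tau> k) \<le> c)"
proof -
  have "NX (Psec n w) = IDL_norm Y NY (lq_norm q) (Psec n w)"
    using NX Psec_in_IDL_set[OF Y_maximal q] by blast
  then show ?thesis by (simp only: IDL_norm_Psec_le_iff[OF Y_maximal q])
qed

lemma NX_Psec_norm_le:
  fixes T :: "'e::real_normed_vector \<Rightarrow> 'f::real_normed_vector"
  assumes r: "1 \<le> r" and T: "bounded_linear T" and x: "omega r n x \<le> 1"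
  shows "NX (Psec n (\<lambda>k. norm (T (x k)))) \<le> real n * onorm T"
  unfolding NX_Psec_le_iff
proof (intro ballI impI)
  fix \<tau> assume \<tau>: "\<tau> \<in> Y" "NY \<tau> \<le> 1"
  have "\<bar>norm (T (x k)) * \<tau> k\<bar> \<le> onorm T" if "k < n" for k
  proof -
    have "norm (T (x k)) \<le> onorm T * norm (x k)" by (rule onorm[OF T])
    also have "\<dots> \<le> onorm T * 1"
      using norm_le_omega[OF r that, of x] x by (intro mult_left_mono onorm_pos_le[OF T]) auto
    finally have "norm (T (x k)) \<le> onorm T" by simp
    moreover have "\<bar>\<tau> k\<bar> \<le> 1" using abs_le_maximal_seq_space_norm[OF Y_maximal \<tau>(1), of k] \<tau>(2) by simp
    ultimately show ?thesis
      using mult_mono[of "norm (T (x k))" "onorm T" "\<bar>\<tau> k\<bar>" 1] onorm_pos_le[OF T] by (simp add: abs_mult)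
  qed
  then have "(\<Sum>k<n. \<bar>norm (T (x k)) * \<tau> k\<bar>) \<le> real n * onorm T"
    using sum_mono[of "{..<n}" "\<lambda>k. \<bar>norm (T (x k)) * \<tau> k\<bar>" "\<lambda>_. onorm T"] by simp
  then show "lq_norm_on q {..<n} (\<lambda>k. norm (T (x k)) * \<tau> k) \<le> real n * onorm T"
    by (rule order_trans[OF lq_norm_on_le_sum[OF q finite_lessThan]])
qed

lemma NX_le_pi_X:
  assumes "1 \<le> r" "bounded_linear T" "omega r n x \<le> 1"
  shows "NX (Psec n (\<lambda>k. norm (T (x k)))) \<le> pi_X NX r n T"
  using NX_Psec_norm_le[OF assms(1,2)] assms(3) by (rule pi_X_upper)

lemma lq_norm_on_coordinates_le_pi_X:
  fixes T :: "'e::real_normed_vector \<Rightarrow> 'f::real_normed_vector"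
  assumes r: "1 \<le> r" "r \<le> q" and T: "bounded_linear T" and x: "omega r n x \<le> 1"
    and \<sigma>: "\<sigma> \<in> Y" "NY \<sigma> \<le> 1"
    and a: "\<And>m. linear (a m)" "\<And>m v. \<bar>a m v\<bar> \<le> norm (T v)"
  shows "lq_norm_on q {..<n} (\<lambda>k. \<sigma> (j k) * a (j k) (x k)) \<le> pi_X NX r n T"
proof -
  obtain z where z: "omega r n z \<le> omega r n x"
    and le: "lq_norm_on q {..<n} (\<lambda>k. \<sigma> (j k) * a (j k) (x k)) \<le> lq_norm_on q {..<n}
      (\<lambda>y. norm (T (z y)) * (if y < n \<and> first_occurrence j y = y then \<sigma> (j y) else 0))"
    by (rule merge_equal_coordinates[OF r a])
  define \<tau> where "\<tau> = (\<lambda>y. if y \<in> {y. y < n \<and> first_occurrence j y = y} then \<sigma> (j y) else 0)"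
  have "inj_on j {y. y < n \<and> first_occurrence j y = y}"
    using inj_on_first_occurrences by (rule inj_on_subset) auto
  then have "\<tau> \<in> Y" "NY \<tau> \<le> 1"
    using maximal_symmetric_seq_space_reindex[OF Y \<sigma>(1) _ _ \<tau>_def] \<sigma>(2) by auto
  then have "lq_norm_on q {..<n} (\<lambda>y. norm (T (z y)) * \<tau> y) \<le> NX (Psec n (\<lambda>y. norm (T (z y))))"
    using NX_Psec_le_iff[of n "\<lambda>y. norm (T (z y))"] by blast
  also have "\<dots> \<le> pi_X NX r n T" using z x by (intro NX_le_pi_X[OF r(1) T]) simp
  finally show ?thesis using le by (simp add: \<tau>_def)
qed

lemma lq_norm_diag_op_le_pi_X:
  fixes T :: "'e::real_normed_vector \<Rightarrow> 'f::real_normed_vector" and R :: "'f \<Rightarrow> (nat \<Rightarrow>\<^sub>C real)"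
  assumes r: "1 \<le> r" "r \<le> q" and T: "bounded_linear T" and x: "omega r n x \<le> 1"
    and R: "bounded_linear R" "onorm R \<le> 1" and \<sigma>: "\<sigma> \<in> Y" "NY \<sigma> \<le> 1"
  shows "lq_norm q (Psec n (\<lambda>k. norm ((diag_op \<sigma> \<circ> R \<circ> T) (x k)))) \<le> pi_X NX r n T"
proof -
  have \<sigma>_linf: "\<sigma> \<in> linf_set" using \<sigma>(1) maximal_seq_space_linf[OF Y_maximal] by blast
  define a where "a m v = apply_bcontfun (R (T v)) m" for m v
  have a_linear: "linear (a m)" for m
    unfolding a_def using bounded_linear_compose[OF bounded_linear_apply_bcontfun bounded_linear_compose[OF R(1) T]]
    by (simp add: bounded_linear.linear)
  have a_le: "\<bar>a m v\<bar> \<le> norm (T v)" for m v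
    using norm_bounded[of "R (T v)" m] norm_le_of_onorm_le_1[OF R] unfolding a_def
    by (simp add: order_trans)
  have "c * lq_norm_on q {..<n} (\<lambda>k. norm (diag_op \<sigma> (R (T (x k))))) \<le> pi_X NX r n T"
    if c: "0 < c" "c < 1" for c
  proof -
    have "\<forall>k. \<exists>j. c * norm (diag_op \<sigma> (R (T (x k)))) \<le> \<bar>\<sigma> j * a j (x k)\<bar>"
      unfolding a_def using norm_diag_op_approx[OF \<sigma>_linf c(2)] by blast
    from choice[OF this] obtain j
      where j: "\<And>k. c * norm (diag_op \<sigma> (R (T (x k)))) \<le> \<bar>\<sigma> (j k) * a (j k) (x k)\<bar>"
      by blast
    have "c * lq_norm_on q {..<n} (\<lambda>k. norm (diag_op \<sigma> (R (T (x k)))))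
        = lq_norm_on q {..<n} (\<lambda>k. c * norm (diag_op \<sigma> (R (T (x k)))))"
      using lq_norm_on_cmult[OF q, of "{..<n}" c] c by simp
    also have "\<dots> \<le> lq_norm_on q {..<n} (\<lambda>k. \<sigma> (j k) * a (j k) (x k))"
      using j c by (intro lq_norm_on_mono[OF q]) auto
    also have "\<dots> \<le> pi_X NX r n T"
      by (rule lq_norm_on_coordinates_le_pi_X[OF r T x \<sigma> a_linear a_le])
    finally show ?thesis .
  qed
  then show ?thesis
    unfolding lq_norm_Psec[OF q] o_def by (rule field_le_mult_one_interval)
qed

lemma pi_pq_diag_op_le_pi_X:
  fixes T :: "'e::real_normed_vector \<Rightarrow> 'f::real_normed_vector" and R :: "'f \<Rightarrow> (nat \<Rightarrow>\<^sub>C real)"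
  assumes r: "1 \<le> r" "r \<le> q" and T: "bounded_linear T"
    and R: "bounded_linear R" "onorm R \<le> 1" and \<sigma>: "\<sigma> \<in> Y" "NY \<sigma> \<le> 1"
  shows "pi_pq q r n (diag_op \<sigma> \<circ> R \<circ> T) \<le> pi_X NX r n T"
  unfolding pi_pq_def using lq_norm_diag_op_le_pi_X[OF r T _ R \<sigma>] by (rule pi_X_least[OF r(1)])

lemma NX_le_Sup_pi_pq:
  fixes T :: "'e::real_normed_vector \<Rightarrow> 'f::real_normed_vector"
  assumes r: "1 \<le> r" "r \<le> q" and T: "bounded_linear T" and x: "omega r n x \<le> 1"
  shows "NX (Psec n (\<lambda>k. norm (T (x k)))) \<le>
    Sup {pi_pq q r n (diag_op \<sigma> \<circ> R \<circ> T) | R \<sigma>.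
           bounded_linear (R :: 'f \<Rightarrow> (nat \<Rightarrow>\<^sub>C real)) \<and> onorm R \<le> 1 \<and> \<sigma> \<in> Y \<and> NY \<sigma> \<le> 1}"
    (is "_ \<le> Sup ?S")
proof -
  obtain R :: "'f \<Rightarrow> (nat \<Rightarrow>\<^sub>C real)" where R: "bounded_linear R" "onorm R \<le> 1"
    and R_norm: "\<And>k. apply_bcontfun (R (T (x k))) k = norm (T (x k))"
    using norming_operator[of "\<lambda>k. T (x k)"] by blast
  have bdd: "bdd_above ?S"
    by (rule bdd_aboveI[where M = "pi_X NX r n T"]) (use pi_pq_diag_op_le_pi_X[OF r T] in blast)
  show ?thesis
    unfolding NX_Psec_le_iff
  proof (intro ballI impI)
    fix \<tau> assume \<tau>: "\<tau> \<in> Y" "NY \<tau> \<le> 1"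
    have \<tau>_linf: "\<tau> \<in> linf_set" using \<tau>(1) maximal_seq_space_linf[OF Y_maximal] by blast
    have "lq_norm_on q {..<n} (\<lambda>k. norm (T (x k)) * \<tau> k)
        \<le> lq_norm q (Psec n (\<lambda>k. norm ((diag_op \<tau> \<circ> R \<circ> T) (x k))))"
      unfolding lq_norm_Psec[OF q]
      using abs_le_norm_diag_op[OF \<tau>_linf, of k "R (T (x k))" for k]
      by (intro lq_norm_on_mono[OF q]) (simp_all add: R_norm abs_mult mult.commute)
    also have "\<dots> \<le> pi_pq q r n (diag_op \<tau> \<circ> R \<circ> T)"
      unfolding pi_pq_def using lq_norm_diag_op_le_pi_X[OF r T _ R \<tau>] x by (rule pi_X_upper)
    also have "\<dots> \<le> Sup ?S" by (rule cSup_upper[OF _ bdd]) (use R \<tau> in blast)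
    finally show "lq_norm_on q {..<n} (\<lambda>k. norm (T (x k)) * \<tau> k) \<le> Sup ?S" .
  qed
qed

lemma Sup_pi_pq_le_pi_X:
  fixes T :: "'e::real_normed_vector \<Rightarrow> 'f::real_normed_vector"
  assumes r: "1 \<le> r" "r \<le> q" and T: "bounded_linear T"
  shows "Sup {pi_pq q r n (diag_op \<sigma> \<circ> R \<circ> T) | R \<sigma>.
      bounded_linear (R :: 'f \<Rightarrow> (nat \<Rightarrow>\<^sub>C real)) \<and> onorm R \<le> 1 \<and> \<sigma> \<in> Y \<and> NY \<sigma> \<le> 1}
    \<le> pi_X NX r n T"
    (is "Sup ?S \<le> _")
proof -
  have "bounded_linear (\<lambda>v::'f. 0 :: nat \<Rightarrow>\<^sub>C real)" "onorm (\<lambda>v::'f. 0 :: nat \<Rightarrow>\<^sub>C real) \<le> 1"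
    by (simp_all add: onorm_zero)
  then have "pi_pq q r n (diag_op (\<lambda>k. 0) \<circ> (\<lambda>v. 0) \<circ> T) \<in> ?S"
    using maximal_seq_space_zero[OF Y_maximal] maximal_seq_space_norm_zero[OF Y_maximal]
    unfolding mem_Collect_eq by (intro exI[of _ "\<lambda>v. 0"] exI[of _ "\<lambda>k. 0"]) simp
  then have ne: "?S \<noteq> {}" by blast
  show "Sup ?S \<le> pi_X NX r n T"
  proof (rule cSup_least[OF ne])
    fix s assume "s \<in> ?S"
    then obtain R :: "'f \<Rightarrow> (nat \<Rightarrow>\<^sub>C real)" and \<sigma>
      where "s = pi_pq q r n (diag_op \<sigma> \<circ> R \<circ> T)" "bounded_linear R" "onorm R \<le> 1" "\<sigma> \<in> Y" "NY \<sigma> \<le> 1"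
      by blast
    then show "s \<le> pi_X NX r n T" using pi_pq_diag_op_le_pi_X[OF r T] by simp
  qed
qed

end

theorem proposition2p1:
  fixes q r :: ereal
    and Y X :: "(nat \<Rightarrow> real) set"
    and NY NX :: "(nat \<Rightarrow> real) \<Rightarrow> real"
    and T :: "'e::banach \<Rightarrow> 'f::banach"
    and n :: nat
  assumes "1 \<le> r" and "r \<le> q"
    and "maximal_symmetric_seq_space Y NY"
    and "X = IDL_set Y NY (lq_set q) (lq_norm q)"
    and "\<forall>\<sigma>\<in>X. NX \<sigma> = IDL_norm Y NY (lq_norm q) \<sigma>"
    and "bounded_linear T"
  shows "pi_X NX r n T =
    Sup {pi_pq q r n (diag_op \<sigma> \<circ> R \<circ> T) | R \<sigma>.
           bounded_linear (R :: 'f \<Rightarrow> (nat \<Rightarrow>\<^sub>C real)) \<and> onorm R \<le> 1 \<and> \<sigma> \<in> Y \<and> NY \<sigma> \<le> 1}"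
    (is "_ = Sup ?S")
proof -
  note r = assms(1,2) and T = assms(6)
  interpret IDL_lq_space q Y NY NX
    using order_trans[OF r] assms(3-5) by unfold_locales simp_all
  show ?thesis
  proof (rule antisym)
    show "pi_X NX r n T \<le> Sup ?S"
      using NX_le_Sup_pi_pq[OF r T] by (rule pi_X_least[OF r(1)])
    show "Sup ?S \<le> pi_X NX r n T" by (rule Sup_pi_pq_le_pi_X[OF r T])
  qed
qed

end
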